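(* Let $\Delta\subseteq\Sigma$ for a finite alphabet $\Sigma$, and let $L\subseteq\Sigma^\omega$ be an aperiodic language such that each string in $L$ contains exactly one occurrence of a symbol from $\Delta$. Then $L$ can be written as a finite union of disjoint languages $R_\ell\, a\, R_r$ where $a\in\Delta$, $R_\ell\subseteq(\Sigma\setminus\Delta)^*$ and $R_r\subseteq(\Sigma\setminus\Delta)^\omega$. Moreover $R_\ell$ and $R_r$ are aperiodic.
   Context: A finite monoid $M$ is aperiodic if there is $n$ with $x^n=x^{n+1}$ for all $x\in M$. A language $K\subseteq\Sigma^*$ is aperiodic if it is recognized by a morphism $h:\Sigma^*\to M$ to a finite aperiodic monoid (i.e. $K=h^{-1}(h(K))$). For $\omega$-languages: given a morphism $h:\Sigma^*\to M$ to a finite monoid, $\omega$-strings $u,v$ are $h$-similar if they factor as $u=u_1u_2\cdots$, $v=v_1v_2\cdots$ with $u_i,v_i\in\Sigma^+$ and $h(u_i)=h(v_i)$; let $\cong$ be its transitive closure; $h$ recognizes $L\subseteq\Sigma^\omega$ if $w\in L$ and $u\cong w$ imply $u\in L$; $L$ is aperiodic if recognized by a morphism to a finite aperiodic monoid. *)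

theory Defs
  imports Main
begin

text \<open>A finite monoid is represented explicitly by a carrier set of naturals
  (every finite monoid is isomorphic to one whose carrier is a finite set of naturals),
  a multiplication and a unit.\<close>

definition finite_aperiodic_monoid :: "nat set \<Rightarrow> (nat \<Rightarrow> nat \<Rightarrow> nat) \<Rightarrow> nat \<Rightarrow> bool" where
  "finite_aperiodic_monoid M mult e \<longleftrightarrow>
     finite M \<and> e \<in> M \<and>
     (\<forall>x\<in>M. \<forall>y\<in>M. mult x y \<in> M) \<and>
     (\<forall>x\<in>M. \<forall>y\<in>M. \<forall>z\<in>M. mult (mult x y) z = mult x (mult y z)) \<and>
     (\<forall>x\<in>M. mult e x = x \<and> mult x e = x) \<and>
     (\<exists>n. \<forall>x\<in>M. (mult x ^^ n) e = (mult x ^^ Suc n) e)"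

definition monoid_morphism :: "'a set \<Rightarrow> ('a list \<Rightarrow> nat) \<Rightarrow> nat set \<Rightarrow> (nat \<Rightarrow> nat \<Rightarrow> nat) \<Rightarrow> nat \<Rightarrow> bool" where
  "monoid_morphism A h M mult e \<longleftrightarrow>
     h [] = e \<and>
     (\<forall>xs\<in>lists A. h xs \<in> M) \<and>
     (\<forall>xs\<in>lists A. \<forall>ys\<in>lists A. h (xs @ ys) = mult (h xs) (h ys))"

definition aperiodic_lang :: "'a set \<Rightarrow> 'a list set \<Rightarrow> bool" where
  "aperiodic_lang A K \<longleftrightarrow> K \<subseteq> lists A \<and>
     (\<exists>M mult e h. finite_aperiodic_monoid M mult e \<and> monoid_morphism A h M mult e \<and>
        K = {w \<in> lists A. h w \<in> h ` K})"

definition omega_words :: "'a set \<Rightarrow> (nat \<Rightarrow> 'a) set" where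
  "omega_words A = {w. range w \<subseteq> A}"

text \<open>u and v are h-similar: factorizations u = u_0 u_1 ..., v = v_0 v_1 ... into
  nonempty finite factors (given by strictly increasing cut points starting at 0)
  with h(u_i) = h(v_i).\<close>
definition h_similar :: "('a list \<Rightarrow> nat) \<Rightarrow> (nat \<Rightarrow> 'a) \<Rightarrow> (nat \<Rightarrow> 'a) \<Rightarrow> bool" where
  "h_similar h u v \<longleftrightarrow>
     (\<exists>f g :: nat \<Rightarrow> nat. strict_mono f \<and> strict_mono g \<and> f 0 = 0 \<and> g 0 = 0 \<and>
        (\<forall>i. h (map u [f i..<f (Suc i)]) = h (map v [g i..<g (Suc i)])))"

definition h_cong :: "'a set \<Rightarrow> ('a list \<Rightarrow> nat) \<Rightarrow> (nat \<Rightarrow> 'a) \<Rightarrow> (nat \<Rightarrow> 'a) \<Rightarrow> bool" where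
  "h_cong A h = (\<lambda>u v. u \<in> omega_words A \<and> v \<in> omega_words A \<and> h_similar h u v)\<^sup>+\<^sup>+"

definition recognizes_omega :: "'a set \<Rightarrow> ('a list \<Rightarrow> nat) \<Rightarrow> (nat \<Rightarrow> 'a) set \<Rightarrow> bool" where
  "recognizes_omega A h L \<longleftrightarrow> (\<forall>w\<in>L. \<forall>u. h_cong A h u w \<longrightarrow> u \<in> L)"

definition aperiodic_omega_lang :: "'a set \<Rightarrow> (nat \<Rightarrow> 'a) set \<Rightarrow> bool" where
  "aperiodic_omega_lang A L \<longleftrightarrow> L \<subseteq> omega_words A \<and>
     (\<exists>M mult e h. finite_aperiodic_monoid M mult e \<and> monoid_morphism A h M mult e \<and>
        recognizes_omega A h L)"

definition conc_omega :: "'a list \<Rightarrow> (nat \<Rightarrow> 'a) \<Rightarrow> (nat \<Rightarrow> 'a)" where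
  "conc_omega xs w = (\<lambda>n. if n < length xs then xs ! n else w (n - length xs))"

definition lang_split :: "'a list set \<Rightarrow> 'a \<Rightarrow> (nat \<Rightarrow> 'a) set \<Rightarrow> (nat \<Rightarrow> 'a) set" where
  "lang_split Rl a Rr = {conc_omega (u @ [a]) v | u v. u \<in> Rl \<and> v \<in> Rr}"

end

theory Submission
  imports Defs
begin

text \<open>Cut every word of \<open>L\<close> at its unique letter \<open>a \<in> \<Delta>\<close> and group the cuts by \<open>a\<close> and by
  the image \<open>m = h u\<close> of the prefix under a recognizing aperiodic morphism \<open>h\<close>. The prefixes
  form the fibre \<open>h\<^sup>-\<^sup>1(m)\<close>, which \<open>h\<close> recognizes. Since \<open>h\<close>-congruence is compatible with
  concatenation, membership in \<open>L\<close> of \<open>u a v\<close> depends on \<open>u\<close> only through \<open>h u\<close>, so the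
  suffixes form the left quotient of \<open>L\<close> by \<open>h\<^sup>-\<^sup>1(m) a\<close>, which \<open>h\<close> recognizes as well.
  Disjointness of the pieces comes from the uniqueness of the cut.\<close>

lemma distinct_map_nth_disjoint:
  assumes "distinct xs" "\<And>x y. x \<in> set xs \<Longrightarrow> y \<in> set xs \<Longrightarrow> x \<noteq> y \<Longrightarrow> F (G x) \<inter> F (G y) = {}"
  shows "\<forall>i<length (map G xs). \<forall>j<length (map G xs). i \<noteq> j \<longrightarrow>
    F (map G xs ! i) \<inter> F (map G xs ! j) = {}"
  using assms by (simp add: nth_eq_iff_index_eq)

lemma conc_omega_Nil [simp]: "conc_omega [] v = v"
  by (simp add: conc_omega_def)

lemma map_conc_omega_prefix: "map (conc_omega p v) [0..<length p] = p"
  by (rule nth_equalityI) (auto simp: conc_omega_def)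

lemma map_conc_omega_shift: "map (conc_omega p v) [length p + i..<length p + j] = map v [i..<j]"
  by (rule nth_equalityI) (auto simp: conc_omega_def)

lemma conc_omega_in_omega_words:
  "set p \<subseteq> A \<Longrightarrow> v \<in> omega_words A \<Longrightarrow> conc_omega p v \<in> omega_words A"
  by (auto simp: omega_words_def conc_omega_def)

lemma h_similar_refl: "h_similar h v v"
  unfolding h_similar_def by (rule exI[of _ id], rule exI[of _ id]) (auto simp: strict_mono_def)

lemma h_similar_conc_omega:
  assumes "h_similar h v v'" "p \<noteq> []" "q \<noteq> []" "h p = h q"
  shows "h_similar h (conc_omega p v) (conc_omega q v')"
proof -
  obtain f g :: "nat \<Rightarrow> nat" where fg: "strict_mono f" "strict_mono g" "f 0 = 0" "g 0 = 0"
    and fg_eq: "\<And>i. h (map v [f i..<f (Suc i)]) = h (map v' [g i..<g (Suc i)])"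
    using assms(1) unfolding h_similar_def by blast
  define f' where "f' i = (case i of 0 \<Rightarrow> 0 | Suc k \<Rightarrow> length p + f k)" for i
  define g' where "g' i = (case i of 0 \<Rightarrow> 0 | Suc k \<Rightarrow> length q + g k)" for i
  have "strict_mono f'" "strict_mono g'"
    unfolding strict_mono_Suc_iff
    using assms(2,3) fg by (auto simp: f'_def g'_def strict_mono_def split: nat.split)
  moreover have "h (map (conc_omega p v) [f' i..<f' (Suc i)])
      = h (map (conc_omega q v') [g' i..<g' (Suc i)])" for i
    using assms(4) fg(3,4) fg_eq
    by (cases i) (simp_all add: f'_def g'_def map_conc_omega_prefix map_conc_omega_shift)
  ultimately show ?thesis
    unfolding h_similar_def by (intro exI[of _ f'] exI[of _ g']) (auto simp: f'_def g'_def)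
qed

lemma h_cong_mono: "h_cong A h x y \<Longrightarrow> A \<subseteq> B \<Longrightarrow> h_cong B h x y"
  unfolding h_cong_def omega_words_def
  by (induction rule: tranclp_induct) (blast intro: tranclp.intros)+

lemma h_cong_imp_omega_words: "h_cong A h x y \<Longrightarrow> x \<in> omega_words A"
  unfolding h_cong_def by (induction rule: tranclp_induct) auto

lemma h_cong_conc_omega:
  assumes "h_cong A h x y" "set p \<subseteq> A"
  shows "h_cong A h (conc_omega p x) (conc_omega p y)"
proof (cases "p = []")
  case False
  have sim: "h_cong A h (conc_omega p y) (conc_omega p z)"
    if "y \<in> omega_words A" "z \<in> omega_words A" "h_similar h y z" for y z
    using that assms(2) False
    unfolding h_cong_def
    by (intro tranclp.r_into_trancl) (simp add: conc_omega_in_omega_words h_similar_conc_omega)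
  from assms(1) show ?thesis
    unfolding h_cong_def
  proof (induction rule: tranclp_induct)
    case (base y)
    then show ?case using sim unfolding h_cong_def by blast
  next
    case (step y z)
    then show ?case using sim unfolding h_cong_def by (meson tranclp_trans)
  qed
qed (use assms in simp)

lemma recognizes_omega_conc_omega_replace:
  assumes "recognizes_omega A h L" "conc_omega q v \<in> L" "h p = h q"
    and "p \<in> lists A" "q \<in> lists A" "p \<noteq> []" "q \<noteq> []" "v \<in> omega_words A"
  shows "conc_omega p v \<in> L"
proof -
  have "h_similar h (conc_omega p v) (conc_omega q v)"
    using assms(3,6,7) by (simp add: h_similar_conc_omega h_similar_refl)
  then have "h_cong A h (conc_omega p v) (conc_omega q v)"
    using assms(4,5,8) unfolding h_cong_def
    by (intro tranclp.r_into_trancl) (simp add: conc_omega_in_omega_words in_lists_conv_set subsetI)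
  then show ?thesis using assms(1,2) unfolding recognizes_omega_def by blast
qed

lemma monoid_morphism_subset:
  assumes "monoid_morphism B h M mult e" "A \<subseteq> B"
  shows "monoid_morphism A h M mult e"
proof -
  have "lists A \<subseteq> lists B" using assms(2) by (rule lists_mono)
  then show ?thesis using assms(1) unfolding monoid_morphism_def by blast
qed

definition left_quotient_omega :: "'a set \<Rightarrow> (nat \<Rightarrow> 'a) set \<Rightarrow> 'a list set \<Rightarrow> (nat \<Rightarrow> 'a) set" where
  "left_quotient_omega A L P = {v \<in> omega_words A. \<exists>p\<in>P. conc_omega p v \<in> L}"

lemma recognizes_omega_left_quotient:
  assumes "recognizes_omega B h L" "A \<subseteq> B" "P \<subseteq> lists B"
  shows "recognizes_omega A h (left_quotient_omega A L P)"
  unfolding recognizes_omega_def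
proof (intro ballI allI impI)
  fix v v' assume v: "v \<in> left_quotient_omega A L P" and cong: "h_cong A h v' v"
  then obtain p where p: "p \<in> P" "conc_omega p v \<in> L"
    unfolding left_quotient_omega_def by blast
  have "h_cong B h (conc_omega p v') (conc_omega p v)"
    using p(1) assms(2,3) cong by (auto intro: h_cong_conc_omega h_cong_mono)
  then have "conc_omega p v' \<in> L"
    using assms(1) p(2) unfolding recognizes_omega_def by blast
  then show "v' \<in> left_quotient_omega A L P"
    using p(1) h_cong_imp_omega_words[OF cong] unfolding left_quotient_omega_def by blast
qed

lemma aperiodic_omega_lang_left_quotient:
  assumes "finite_aperiodic_monoid M mult e" "monoid_morphism B h M mult e"
    and "recognizes_omega B h L" "A \<subseteq> B" "P \<subseteq> lists B"
  shows "aperiodic_omega_lang A (left_quotient_omega A L P)"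
proof -
  have "left_quotient_omega A L P \<subseteq> omega_words A"
    unfolding left_quotient_omega_def by blast
  then show ?thesis
    unfolding aperiodic_omega_lang_def
    using assms monoid_morphism_subset[OF assms(2,4)] recognizes_omega_left_quotient[OF assms(3-5)]
    by blast
qed

lemma conc_omega_marker_iff:
  assumes "set u \<subseteq> \<Sigma> - \<Delta>" "a \<in> \<Delta>" "v \<in> omega_words (\<Sigma> - \<Delta>)"
  shows "conc_omega (u @ [a]) v n \<in> \<Delta> \<longleftrightarrow> n = length u"
proof -
  have "n < length u \<Longrightarrow> u ! n \<notin> \<Delta>" using assms(1) nth_mem by blast
  moreover have "v k \<notin> \<Delta>" for k using assms(3) by (auto simp: omega_words_def)
  ultimately show ?thesis using assms(2)
    by (auto simp: conc_omega_def nth_append not_less)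
qed

lemma conc_omega_marker_inj:
  assumes eq: "conc_omega (u @ [a]) v = conc_omega (u' @ [a']) v'"
    and "set u \<subseteq> \<Sigma> - \<Delta>" "a \<in> \<Delta>" "v \<in> omega_words (\<Sigma> - \<Delta>)"
    and "set u' \<subseteq> \<Sigma> - \<Delta>" "a' \<in> \<Delta>" "v' \<in> omega_words (\<Sigma> - \<Delta>)"
  shows "u = u' \<and> a = a'"
proof -
  have len: "length u = length u'"
    using conc_omega_marker_iff[OF assms(2-4), of "length u"]
      conc_omega_marker_iff[OF assms(5-7), of "length u"] eq
    by auto
  have "u ! k = u' ! k" if "k < length u" for k
    using fun_cong[OF eq, of k] that len by (simp add: conc_omega_def nth_append)
  with len have "u = u'" by (simp add: nth_equalityI)
  moreover have "a = a'"
    using fun_cong[OF eq, of "length u"] len by (simp add: conc_omega_def nth_append)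
  ultimately show ?thesis by simp
qed

lemma lang_split_disjoint:
  assumes "Rl \<subseteq> lists (\<Sigma> - \<Delta>)" "a \<in> \<Delta>" "Rr \<subseteq> omega_words (\<Sigma> - \<Delta>)"
    and "Rl' \<subseteq> lists (\<Sigma> - \<Delta>)" "a' \<in> \<Delta>" "Rr' \<subseteq> omega_words (\<Sigma> - \<Delta>)"
    and "Rl \<inter> Rl' = {} \<or> a \<noteq> a'"
  shows "lang_split Rl a Rr \<inter> lang_split Rl' a' Rr' = {}"
proof (rule ccontr)
  assume "lang_split Rl a Rr \<inter> lang_split Rl' a' Rr' \<noteq> {}"
  then obtain u v u' v' where eq: "conc_omega (u @ [a]) v = conc_omega (u' @ [a']) v'"
    and u: "u \<in> Rl" and "v \<in> Rr" and u': "u' \<in> Rl'" and "v' \<in> Rr'"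
    unfolding lang_split_def by blast
  moreover have "set u \<subseteq> \<Sigma> - \<Delta>" "set u' \<subseteq> \<Sigma> - \<Delta>"
    using u u' assms(1,4) lists_eq_set by blast+
  ultimately have "u = u' \<and> a = a'"
    using assms(2,3,5,6) conc_omega_marker_inj[OF eq] by blast
  with assms(7) u u' show False by blast
qed

lemma unique_marker_decomp:
  assumes "w \<in> omega_words \<Sigma>" "\<And>j. w j \<in> \<Delta> \<Longrightarrow> j = i"
  obtains u v where "u \<in> lists (\<Sigma> - \<Delta>)" "v \<in> omega_words (\<Sigma> - \<Delta>)" "w = conc_omega (u @ [w i]) v"
proof (rule that)
  have w: "w n \<in> \<Sigma> - \<Delta>" if "n \<noteq> i" for n
    using assms that by (fastforce simp: omega_words_def)
  show "map w [0..<i] \<in> lists (\<Sigma> - \<Delta>)"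
    using w by (simp add: in_lists_conv_set)
  show "(\<lambda>n. w (n + Suc i)) \<in> omega_words (\<Sigma> - \<Delta>)"
    unfolding omega_words_def by (auto intro!: w)
  show "w = conc_omega (map w [0..<i] @ [w i]) (\<lambda>n. w (n + Suc i))"
    by (rule ext) (auto simp: conc_omega_def nth_append intro: arg_cong[of _ _ w])
qed

definition fiber :: "'a set \<Rightarrow> ('a list \<Rightarrow> nat) \<Rightarrow> nat \<Rightarrow> 'a list set" where
  "fiber A h m = {u \<in> lists A. h u = m}"

definition fiber_quotient ::
  "'a set \<Rightarrow> (nat \<Rightarrow> 'a) set \<Rightarrow> ('a list \<Rightarrow> nat) \<Rightarrow> nat \<Rightarrow> 'a \<Rightarrow> (nat \<Rightarrow> 'a) set" where
  "fiber_quotient A L h m a = left_quotient_omega A L ((\<lambda>u. u @ [a]) ` fiber A h m)"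

lemma fiber_subset_lists: "fiber A h m \<subseteq> lists A"
  by (auto simp: fiber_def)

lemma fiber_quotient_subset_omega_words: "fiber_quotient A L h m a \<subseteq> omega_words A"
  by (auto simp: fiber_quotient_def left_quotient_omega_def)

lemma fiber_disjoint: "m \<noteq> m' \<Longrightarrow> fiber A h m \<inter> fiber A h m' = {}"
  by (auto simp: fiber_def)

lemma aperiodic_lang_fiber:
  assumes "finite_aperiodic_monoid M mult e" "monoid_morphism A h M mult e"
  shows "aperiodic_lang A (fiber A h m)"
proof -
  have "fiber A h m = {w \<in> lists A. h w \<in> h ` fiber A h m}"
    by (auto simp: fiber_def)
  then show ?thesis
    unfolding aperiodic_lang_def using assms fiber_subset_lists by blast
qed

lemma aperiodic_omega_lang_fiber_quotient:
  assumes "finite_aperiodic_monoid M mult e" "monoid_morphism \<Sigma> h M mult e"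
    and "recognizes_omega \<Sigma> h L" "A \<subseteq> \<Sigma>" "a \<in> \<Sigma>"
  shows "aperiodic_omega_lang A (fiber_quotient A L h m a)"
proof -
  have "(\<lambda>u. u @ [a]) ` fiber A h m \<subseteq> lists \<Sigma>"
    using assms(4,5) fiber_subset_lists by fastforce
  then show ?thesis
    unfolding fiber_quotient_def by (rule aperiodic_omega_lang_left_quotient[OF assms(1-4)])
qed

lemma lang_split_fiber_subset:
  assumes "monoid_morphism \<Sigma> h M mult e" "recognizes_omega \<Sigma> h L" "A \<subseteq> \<Sigma>" "a \<in> \<Sigma>"
  shows "lang_split (fiber A h m) a (fiber_quotient A L h m a) \<subseteq> L"
proof
  fix w assume "w \<in> lang_split (fiber A h m) a (fiber_quotient A L h m a)"
  then obtain u u' v where w: "w = conc_omega (u @ [a]) v"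
    and u: "u \<in> fiber A h m" and u': "u' \<in> fiber A h m"
    and v: "v \<in> omega_words A" and u'_v: "conc_omega (u' @ [a]) v \<in> L"
    unfolding lang_split_def fiber_quotient_def left_quotient_omega_def by blast
  have "u \<in> lists \<Sigma>" "u' \<in> lists \<Sigma>" "[a] \<in> lists \<Sigma>"
    using u u' assms(3,4) by (auto simp: fiber_def)
  moreover have "h (u @ [a]) = h (u' @ [a])"
    using calculation u u' assms(1) by (simp add: fiber_def monoid_morphism_def)
  moreover have "v \<in> omega_words \<Sigma>"
    using v assms(3) by (auto simp: omega_words_def)
  ultimately show "w \<in> L"
    unfolding w using recognizes_omega_conc_omega_replace[OF assms(2) u'_v] by simp
qed

lemma marked_lang_subset_Union_lang_split:
  assumes "monoid_morphism \<Sigma> h M mult e" "L \<subseteq> omega_words \<Sigma>" "\<forall>w\<in>L. \<exists>!i. w i \<in> \<Delta>"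
  shows "L \<subseteq> (\<Union>(m, a)\<in>M \<times> \<Delta>.
    lang_split (fiber (\<Sigma> - \<Delta>) h m) a (fiber_quotient (\<Sigma> - \<Delta>) L h m a))"
proof
  fix w assume wL: "w \<in> L"
  then obtain i where i: "w i \<in> \<Delta>" "\<And>j. w j \<in> \<Delta> \<Longrightarrow> j = i"
    using assms(3) by blast
  from wL assms(2) have "w \<in> omega_words \<Sigma>" by blast
  then obtain u v where u: "u \<in> lists (\<Sigma> - \<Delta>)" and v: "v \<in> omega_words (\<Sigma> - \<Delta>)"
    and w: "w = conc_omega (u @ [w i]) v"
    using unique_marker_decomp[where \<Delta> = \<Delta> and i = i] i(2) by blast
  define a where "a = w i"
  have w_split: "w = conc_omega (u @ [a]) v"
    unfolding a_def by (rule w)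
  have u_fiber: "u \<in> fiber (\<Sigma> - \<Delta>) h (h u)"
    using u by (simp add: fiber_def)
  have "conc_omega (u @ [a]) v \<in> L"
    unfolding w_split[symmetric] by (rule wL)
  then have "v \<in> fiber_quotient (\<Sigma> - \<Delta>) L h (h u) a"
    using u_fiber v unfolding fiber_quotient_def left_quotient_omega_def by blast
  then have "w \<in> lang_split (fiber (\<Sigma> - \<Delta>) h (h u)) a (fiber_quotient (\<Sigma> - \<Delta>) L h (h u) a)"
    using u_fiber unfolding lang_split_def w_split by blast
  moreover have "h u \<in> M"
    using u assms(1) by (auto simp: monoid_morphism_def)
  moreover have "a \<in> \<Delta>"
    using i(1) by (simp add: a_def)
  ultimately show "w \<in> (\<Union>(m, a)\<in>M \<times> \<Delta>.
      lang_split (fiber (\<Sigma> - \<Delta>) h m) a (fiber_quotient (\<Sigma> - \<Delta>) L h m a))"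
    by blast
qed

definition fiber_piece ::
  "'a set \<Rightarrow> 'a set \<Rightarrow> (nat \<Rightarrow> 'a) set \<Rightarrow> ('a list \<Rightarrow> nat) \<Rightarrow> nat \<times> 'a
    \<Rightarrow> 'a list set \<times> 'a \<times> (nat \<Rightarrow> 'a) set" where
  "fiber_piece \<Sigma> \<Delta> L h = (\<lambda>(m, a). (fiber (\<Sigma> - \<Delta>) h m, a, fiber_quotient (\<Sigma> - \<Delta>) L h m a))"

lemma marked_lang_eq_Union_fiber_pieces:
  assumes "monoid_morphism \<Sigma> h M mult e" "recognizes_omega \<Sigma> h L" "L \<subseteq> omega_words \<Sigma>"
    and "\<Delta> \<subseteq> \<Sigma>" "\<forall>w\<in>L. \<exists>!i. w i \<in> \<Delta>"
  shows "L = (\<Union>(Rl, a, Rr)\<in>fiber_piece \<Sigma> \<Delta> L h ` (M \<times> \<Delta>). lang_split Rl a Rr)"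
proof (rule subset_antisym)
  show "L \<subseteq> (\<Union>(Rl, a, Rr)\<in>fiber_piece \<Sigma> \<Delta> L h ` (M \<times> \<Delta>). lang_split Rl a Rr)"
    using marked_lang_subset_Union_lang_split[OF assms(1,3,5)]
    by (simp add: fiber_piece_def case_prod_beta)
  show "(\<Union>(Rl, a, Rr)\<in>fiber_piece \<Sigma> \<Delta> L h ` (M \<times> \<Delta>). lang_split Rl a Rr) \<subseteq> L"
  proof (rule UN_least)
    fix p assume "p \<in> fiber_piece \<Sigma> \<Delta> L h ` (M \<times> \<Delta>)"
    then obtain m a where p: "p = fiber_piece \<Sigma> \<Delta> L h (m, a)" and "a \<in> \<Sigma>"
      using assms(4) by blast
    then show "(case p of (Rl, a, Rr) \<Rightarrow> lang_split Rl a Rr) \<subseteq> L"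
      using lang_split_fiber_subset[OF assms(1,2) Diff_subset] by (simp add: fiber_piece_def)
  qed
qed

lemma lang_split_fiber_piece_disjoint:
  assumes "x \<in> A \<times> \<Delta>" "y \<in> A \<times> \<Delta>" "x \<noteq> y"
  shows "(case fiber_piece \<Sigma> \<Delta> L h x of (Rl, a, Rr) \<Rightarrow> lang_split Rl a Rr) \<inter>
    (case fiber_piece \<Sigma> \<Delta> L h y of (Rl, a, Rr) \<Rightarrow> lang_split Rl a Rr) = {}"
proof -
  obtain m a m' a' where xy: "x = (m, a)" "y = (m', a')" by fastforce
  have "a \<in> \<Delta>" "a' \<in> \<Delta>"
    using assms(1,2) xy by auto
  moreover have "fiber (\<Sigma> - \<Delta>) h m \<inter> fiber (\<Sigma> - \<Delta>) h m' = {} \<or> a \<noteq> a'"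
    using assms(3) xy fiber_disjoint by blast
  ultimately show ?thesis
    unfolding xy fiber_piece_def prod.case
    by (rule lang_split_disjoint[OF fiber_subset_lists _ fiber_quotient_subset_omega_words
        fiber_subset_lists _ fiber_quotient_subset_omega_words])
qed

lemma aperiodic_fiber_piece:
  assumes "finite_aperiodic_monoid M mult e" "monoid_morphism \<Sigma> h M mult e"
    and "recognizes_omega \<Sigma> h L" "\<Delta> \<subseteq> \<Sigma>" "x \<in> A \<times> \<Delta>"
  shows "case fiber_piece \<Sigma> \<Delta> L h x of (Rl, a, Rr) \<Rightarrow>
    a \<in> \<Delta> \<and> Rl \<subseteq> lists (\<Sigma> - \<Delta>) \<and> Rr \<subseteq> omega_words (\<Sigma> - \<Delta>) \<and>
    aperiodic_lang (\<Sigma> - \<Delta>) Rl \<and> aperiodic_omega_lang (\<Sigma> - \<Delta>) Rr"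
proof -
  obtain m a where x: "x = (m, a)" and a: "a \<in> \<Delta>"
    using assms(5) by blast
  have "aperiodic_lang (\<Sigma> - \<Delta>) (fiber (\<Sigma> - \<Delta>) h m)"
    using aperiodic_lang_fiber[OF assms(1) monoid_morphism_subset[OF assms(2) Diff_subset]] .
  moreover have "aperiodic_omega_lang (\<Sigma> - \<Delta>) (fiber_quotient (\<Sigma> - \<Delta>) L h m a)"
    using a assms(4) by (intro aperiodic_omega_lang_fiber_quotient[OF assms(1-3)]) auto
  ultimately show ?thesis
    unfolding x fiber_piece_def prod.case
    using a by (simp add: fiber_subset_lists fiber_quotient_subset_omega_words)
qed

theorem mainTheorem8:
  fixes \<Sigma> \<Delta> :: "'a set" and L :: "(nat \<Rightarrow> 'a) set"
  assumes "finite \<Sigma>"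
    and "\<Delta> \<subseteq> \<Sigma>"
    and "aperiodic_omega_lang \<Sigma> L"
    and "\<forall>w\<in>L. \<exists>!i. w i \<in> \<Delta>"
  shows "\<exists>parts :: ('a list set \<times> 'a \<times> (nat \<Rightarrow> 'a) set) list.
           L = (\<Union>(Rl, a, Rr)\<in>set parts. lang_split Rl a Rr) \<and>
           (\<forall>i<length parts. \<forall>j<length parts. i \<noteq> j \<longrightarrow>
              (case parts ! i of (Rl, a, Rr) \<Rightarrow> lang_split Rl a Rr) \<inter>
              (case parts ! j of (Rl, a, Rr) \<Rightarrow> lang_split Rl a Rr) = {}) \<and>
           (\<forall>(Rl, a, Rr)\<in>set parts.
              a \<in> \<Delta> \<and> Rl \<subseteq> lists (\<Sigma> - \<Delta>) \<and> Rr \<subseteq> omega_words (\<Sigma> - \<Delta>) \<and>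
              aperiodic_lang (\<Sigma> - \<Delta>) Rl \<and> aperiodic_omega_lang (\<Sigma> - \<Delta>) Rr)"
proof -
  obtain M mult e h where ap: "finite_aperiodic_monoid M mult e"
    and mor: "monoid_morphism \<Sigma> h M mult e" and rec: "recognizes_omega \<Sigma> h L"
    and L: "L \<subseteq> omega_words \<Sigma>"
    using assms(3) unfolding aperiodic_omega_lang_def by blast
  have "finite (M \<times> \<Delta>)"
    using ap assms(1,2) finite_subset unfolding finite_aperiodic_monoid_def by blast
  then obtain xs where xs: "set xs = M \<times> \<Delta>" "distinct xs"
    using finite_distinct_list by blast
  let ?parts = "map (fiber_piece \<Sigma> \<Delta> L h) xs"
  have "L = (\<Union>(Rl, a, Rr)\<in>set ?parts. lang_split Rl a Rr)"
    unfolding set_map xs(1) by (rule marked_lang_eq_Union_fiber_pieces[OF mor rec L assms(2,4)])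
  moreover have "\<forall>i<length ?parts. \<forall>j<length ?parts. i \<noteq> j \<longrightarrow>
      (case ?parts ! i of (Rl, a, Rr) \<Rightarrow> lang_split Rl a Rr) \<inter>
      (case ?parts ! j of (Rl, a, Rr) \<Rightarrow> lang_split Rl a Rr) = {}"
    using xs by (intro distinct_map_nth_disjoint lang_split_fiber_piece_disjoint) auto
  moreover have "\<forall>(Rl, a, Rr)\<in>set ?parts.
      a \<in> \<Delta> \<and> Rl \<subseteq> lists (\<Sigma> - \<Delta>) \<and> Rr \<subseteq> omega_words (\<Sigma> - \<Delta>) \<and>
      aperiodic_lang (\<Sigma> - \<Delta>) Rl \<and> aperiodic_omega_lang (\<Sigma> - \<Delta>) Rr"
    using aperiodic_fiber_piece[OF ap mor rec assms(2)] xs(1) by auto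
  ultimately show ?thesis
    by blast
qed

end
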